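(* Let $(a_n)_{n\ge1}$ be an increasing sequence of positive integers with positive lower asymptotic density $\underline{\delta}=\liminf_{N\to\infty}\frac1N\#\{n\ge1:a_n\le N\}$, and let $x=(x_1,\dots,x_d)\in\mathbb{R}^d$ be such that $1,x_1,\dots,x_d$ are linearly independent over $\mathbb{Q}$. Then for every nonempty dyadic cube $\lambda\subseteq[0,1)^d$, $\liminf_{j\to\infty}2^{-dj}\#\mathrm{M}((\{a_nx\})_{n\ge1};\lambda,j)\le480^d\left(\kappa(x)/\underline{\delta}\right)^{d/(d+1)}$.
   Context: $\{z\}$ is the coordinatewise fractional part. For $z\in\mathbb{R}^d$, $\|z\|=\inf_{p\in\mathbb{Z}^d}|z-p|_\infty$ (supremum norm), and $\kappa(x)=\liminf_{q\to\infty}q^{1/d}\|qx\|$. A dyadic cube is $\lambda=2^{-j}(k+[0,1)^d)$, $j\in\mathbb{Z}$, $k\in\mathbb{Z}^d$, with generation $\langle\lambda\rangle=j$. For a nonempty dyadic cube $\lambda$, an integer $j\ge0$ and a sequence $(x_n)_{n\ge1}$, $\mathrm{M}((x_n)_{n\ge1};\lambda,j)$ is the set of dyadic cubes $\lambda'\subseteq\lambda$ of generation $\langle\lambda\rangle+j$ such that $x_n\in\lambda'$ for some $n\le2^{d\langle\lambda'\rangle}$. *)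

theory Defs
  imports "HOL-Analysis.Analysis"
begin

definition supnorm :: "real^'d \<Rightarrow> real" where
  "supnorm z = Max (range (\<lambda>i. \<bar>z $ i\<bar>))"

definition lattice_dist :: "real^'d \<Rightarrow> real" where
  "lattice_dist z = Inf {supnorm (z - p) | p. \<forall>i. p $ i \<in> \<int>}"

definition kappa :: "real^'d \<Rightarrow> ereal" where
  "kappa x = Liminf sequentially
     (\<lambda>q::nat. ereal (real q powr (1 / real CARD('d)) * lattice_dist (real q *\<^sub>R x)))"

definition frac_vec :: "real^'d \<Rightarrow> real^'d" where
  "frac_vec z = (\<chi> i. frac (z $ i))"

definition dyadic_cube :: "int \<Rightarrow> ('d \<Rightarrow> int) \<Rightarrow> (real^'d) set" where
  "dyadic_cube j k = {y. \<forall>i. 2 powi j * y $ i - of_int (k i) \<in> {0..<1}}"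

definition is_dyadic_cube :: "(real^'d) set \<Rightarrow> bool" where
  "is_dyadic_cube L \<longleftrightarrow> (\<exists>j k. L = dyadic_cube j k)"

definition generation :: "(real^'d) set \<Rightarrow> int" where
  "generation L = (THE j. \<exists>k. L = dyadic_cube j k)"

definition dyadicM :: "(nat \<Rightarrow> real^'d) \<Rightarrow> (real^'d) set \<Rightarrow> nat \<Rightarrow> (real^'d) set set" where
  "dyadicM xs L j = {L'. is_dyadic_cube L' \<and> L' \<subseteq> L \<and>
      generation L' = generation L + int j \<and>
      (\<exists>n. 1 \<le> n \<and> real n \<le> 2 powi (int CARD('d) * generation L') \<and> xs n \<in> L')}"

end

theory Submission
  imports Defs
begin

text \<open>
  Choose a denominator q with q^(1/d) \<parallel>q x\<parallel> < \<kappa> and a scale J with 2^J \<approx> (\<delta>/\<kappa>)^(1/(d+1)) q^(1/d).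
  By positive density, the first 2^(dJ) terms satisfy a_n \<le> N \<approx> 2^(dJ)/\<delta>; writing a_n = m q + r then shows
  that {a_n x} lies within 2^(-J) of {r x}. Hence each occupied subcube of generation J is one of the
  3^d neighbours of the cell of {r x}, for a residue r < q whose point {r x} returns to a window around L.
  If L has generation g, Kronecker's theorem provides 2^(d(g-1)) integer translates moving that window
  to pairwise disjoint positions, so only about 2q / 2^(d(g-1)) residues return. Altogether
  2^(-d(J-g)) #M \<le> 2 \<cdot> 6^d q / 2^(dJ) \<le> 2 \<cdot> 12^d (2\<kappa>/\<delta>)^(d/(d+1)) for infinitely many scales, and
  letting \<kappa> decrease to \<kappa>(x) and \<delta> increase to the density gives the claim, since 4 \<cdot> 12^d \<le> 480^d.
\<close>

section \<open>Kronecker approximation in several variables\<close>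

definition rat_independent_with_1 :: "real^'d \<Rightarrow> bool" where
  "rat_independent_with_1 x \<longleftrightarrow>
     (\<forall>(c0::rat) (c::'d \<Rightarrow> rat).
        of_rat c0 + (\<Sum>i\<in>UNIV. of_rat (c i) * x $ i) = 0 \<longrightarrow> c0 = 0 \<and> (\<forall>i. c i = 0))"

lemma rat_independent_with_1_int:
  assumes "rat_independent_with_1 x" and "of_int c0 + (\<Sum>i\<in>UNIV. of_int (c i) * x $ i) = 0"
  shows "c0 = 0 \<and> (\<forall>i. c i = 0)"
proof -
  have "of_rat (of_int c0) + (\<Sum>i\<in>UNIV. of_rat (of_int (c i)) * x $ i) = 0"
    using assms(2) by simp
  then have "(of_int c0 :: rat) = 0 \<and> (\<forall>i. (of_int (c i) :: rat) = 0)"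
    using assms(1) unfolding rat_independent_with_1_def
    by (elim allE[of _ "of_int c0"] allE[of _ "\<lambda>i. of_int (c i)"]) blast
  then show ?thesis by simp
qed

lemma int_independent_imp_inj_on:
  fixes \<theta> :: "nat \<Rightarrow> real"
  assumes indep: "\<And>c::nat \<Rightarrow> int. (\<Sum>j\<le>n. of_int (c j) * \<theta> j) = 0 \<Longrightarrow> \<forall>j\<le>n. c j = 0"
  shows "inj_on \<theta> {..n}"
proof (rule inj_onI, rule ccontr)
  fix a b assume ab: "a \<in> {..n}" "b \<in> {..n}" "\<theta> a = \<theta> b" "a \<noteq> b"
  define c :: "nat \<Rightarrow> int" where "c j = (if j = a then 1 else if j = b then -1 else 0)" for j
  have "(\<Sum>j\<le>n. of_int (c j) * \<theta> j) = (\<Sum>j\<in>{a, b}. of_int (c j) * \<theta> j)"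
    by (rule sum.mono_neutral_right) (use ab in \<open>auto simp: c_def\<close>)
  also have "\<dots> = 0" using ab by (simp add: c_def)
  finally have "(\<Sum>j\<le>n. of_int (c j) * \<theta> j) = 0" .
  then have "c a = 0" using indep ab by auto
  then show False using ab by (simp add: c_def)
qed

lemma int_independent_imp_module_independent:
  fixes \<theta> :: "nat \<Rightarrow> real"
  assumes indep: "\<And>c::nat \<Rightarrow> int. (\<Sum>j\<le>n. of_int (c j) * \<theta> j) = 0 \<Longrightarrow> \<forall>j\<le>n. c j = 0"
  shows "module.independent (\<lambda>r x. of_int r * x) (\<theta> ` {..n})"
proof -
  interpret M: Modules.module "\<lambda>r x. of_int r * x :: real"
    by (simp add: Modules.module.intro distrib_left mult.commute)
  have inj: "inj_on \<theta> {..n}" using indep by (rule int_independent_imp_inj_on)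
  show ?thesis
  proof
    assume "M.dependent (\<theta> ` {..n})"
    then obtain t u where t: "finite t" "t \<subseteq> \<theta> ` {..n}"
      and sum_t: "(\<Sum>v\<in>t. of_int (u v) * v) = 0" and nontriv: "\<exists>v\<in>t. u v \<noteq> 0"
      unfolding M.dependent_explicit by blast
    define S where "S = {j\<in>{..n}. \<theta> j \<in> t}"
    have t_eq: "t = \<theta> ` S" using t unfolding S_def by auto
    define c where "c j = (if j \<in> S then u (\<theta> j) else 0)" for j
    have "(\<Sum>j\<le>n. of_int (c j) * \<theta> j) = (\<Sum>j\<in>S. of_int (u (\<theta> j)) * \<theta> j)"
      by (rule sum.mono_neutral_cong_right) (auto simp: S_def c_def)
    also have "\<dots> = (\<Sum>v\<in>t. of_int (u v) * v)"
    proof -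
      have "inj_on \<theta> S" using inj by (rule inj_on_subset) (auto simp: S_def)
      then show ?thesis unfolding t_eq by (simp add: sum.reindex)
    qed
    finally have c0: "\<forall>j\<le>n. c j = 0" using sum_t indep by simp
    from nontriv obtain j where "j \<in> S" "u (\<theta> j) \<noteq> 0" unfolding t_eq by blast
    then show False using c0 by (auto simp: c_def S_def)
  qed
qed

lemma kronecker_approx_vec:
  fixes x \<beta> :: "real^'d"
  assumes indep: "rat_independent_with_1 x" and "\<epsilon> > 0"
  obtains t :: int where "\<And>i. \<exists>m::int. \<bar>of_int t * x $ i - of_int m - \<beta> $ i\<bar> < \<epsilon>"
proof -
  define n where "n = CARD('d)"
  obtain h where h: "bij_betw h {..<n} (UNIV::'d set)"
    using ex_bij_betw_nat_finite[of "UNIV::'d set"] unfolding n_def atLeast0LessThan by auto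
  define h' where "h' = inv_into {..<n} h"
  have h'_h: "h (h' i) = i" and h'_lt: "h' i < n" for i
    using h bij_betw_inv_into_right bij_betwE[OF bij_betw_inv_into[OF h]]
    unfolding h'_def by fastforce+
  have h_h': "h' (h j) = j" if "j < n" for j
    using h that unfolding h'_def by (simp add: bij_betw_inv_into_left)
  define \<theta> where "\<theta> j = (if j < n then x $ h j else 1)" for j
  define \<alpha> where "\<alpha> j = (if j < n then \<beta> $ h j else 0)" for j
  have \<theta>_indep: "\<forall>j\<le>n. c j = 0" if "(\<Sum>j\<le>n. of_int (c j) * \<theta> j) = 0" for c :: "nat \<Rightarrow> int"
  proof -
    have "(\<Sum>j\<le>n. of_int (c j) * \<theta> j) = of_int (c n) + (\<Sum>j<n. of_int (c j) * x $ h j)"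
      by (simp add: lessThan_Suc_atMost[symmetric] \<theta>_def)
    also have "(\<Sum>j<n. of_int (c j) * x $ h j) = (\<Sum>j<n. of_int (c (h' (h j))) * x $ h j)"
      by (simp add: h_h')
    also have "\<dots> = (\<Sum>i\<in>UNIV. of_int (c (h' i)) * x $ i)"
      by (rule sum.reindex_bij_betw[OF h])
    finally have "c n = 0 \<and> (\<forall>i. c (h' i) = 0)"
      using that rat_independent_with_1_int[OF indep, of "c n" "\<lambda>i. c (h' i)"] by simp
    then show ?thesis by (metis h_h' le_neq_implies_less)
  qed
  obtain k m where km: "\<And>j. j < n \<Longrightarrow> \<bar>of_int k * \<theta> j - of_int (m j) - \<alpha> j\<bar> < \<epsilon>"
    using Kronecker_thm_2[OF int_independent_imp_module_independent[of \<theta> n, OF \<theta>_indep]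
        int_independent_imp_inj_on[of \<theta> n, OF \<theta>_indep] _ \<open>\<epsilon> > 0\<close>, where \<alpha> = \<alpha>]
    by (auto simp: \<theta>_def)
  show ?thesis
  proof (rule that[of k])
    fix i
    show "\<exists>m::int. \<bar>of_int k * x $ i - of_int m - \<beta> $ i\<bar> < \<epsilon>"
      using km[OF h'_lt[of i]] by (auto simp: \<theta>_def \<alpha>_def h'_lt h'_h)
  qed
qed

section \<open>Dyadic cubes and fractional parts\<close>

lemma mem_dyadic_cube_iff:
  "y \<in> dyadic_cube j k \<longleftrightarrow> (\<forall>i. of_int (k i) \<le> 2 powi j * y $ i \<and> 2 powi j * y $ i < of_int (k i) + 1)"
  unfolding dyadic_cube_def by (auto simp: algebra_simps)

lemma dyadic_cube_index: "y \<in> dyadic_cube j k \<Longrightarrow> k = (\<lambda>i. \<lfloor>2 powi j * y $ i\<rfloor>)"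
  unfolding mem_dyadic_cube_iff by (auto intro!: ext floor_unique[symmetric])

lemma dyadic_cube_corner: "(\<chi> i. of_int (k i) / 2 powi j) \<in> dyadic_cube j k"
  unfolding mem_dyadic_cube_iff by simp

lemma dyadic_cube_neq_coarser:
  fixes k k' :: "'d::finite \<Rightarrow> int"
  assumes "j' < j"
  shows "dyadic_cube j k \<noteq> dyadic_cube j' k'"
proof
  assume eq: "dyadic_cube j k = dyadic_cube j' k'"
  define P P' :: real where "P = 2 powi j" and "P' = 2 powi j'"
  have "P' < P" using assms unfolding P_def P'_def by (rule power_int_strict_increasing) simp
  have P_pos: "P > 0" "P' > 0" unfolding P_def P'_def by auto
  define a a' :: "real^'d" where "a = (\<chi> i. of_int (k i) / P)" and "a' = (\<chi> i. of_int (k' i) / P')"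
  have "a \<in> dyadic_cube j' k'" "a' \<in> dyadic_cube j k"
    unfolding a_def a'_def P_def P'_def using dyadic_cube_corner eq by metis+
  then have "of_int (k' i) \<le> P' * a $ i" "of_int (k i) \<le> P * a' $ i" for i
    unfolding mem_dyadic_cube_iff P_def P'_def by blast+
  then have "a $ i = a' $ i" for i
    using P_pos unfolding a_def a'_def by (simp add: field_simps) (meson order_antisym)
  define b where "b = (\<chi> i. a $ i + 1 / P)"
  have "b \<notin> dyadic_cube j k"
    using P_pos unfolding mem_dyadic_cube_iff b_def a_def P_def[symmetric] by (simp add: field_simps)
  moreover have "P' * b $ i = of_int (k' i) + P' / P" for i
    using P_pos \<open>a $ i = a' $ i\<close> unfolding b_def a'_def by (simp add: field_simps)
  then have "b \<in> dyadic_cube j' k'"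
    using P_pos \<open>P' < P\<close> unfolding mem_dyadic_cube_iff P'_def[symmetric] by simp
  ultimately show False using eq by simp
qed

lemma dyadic_cube_eq_imp_generation_eq: "dyadic_cube j k = dyadic_cube j' k' \<Longrightarrow> j = j'"
  by (metis dyadic_cube_neq_coarser linorder_neqE)

lemma generation_dyadic_cube [simp]: "generation (dyadic_cube j k) = j"
  unfolding generation_def
  by (rule the_equality) (auto dest: dyadic_cube_eq_imp_generation_eq)

lemma dyadic_cube_in_unit_cube_generation_nonneg:
  fixes k :: "'d::finite \<Rightarrow> int"
  assumes "dyadic_cube j k \<subseteq> {y. \<forall>i. 0 \<le> y $ i \<and> y $ i < 1}"
  shows "0 \<le> j"
proof (rule ccontr)
  assume "\<not> 0 \<le> j"
  then have "(2::real) powi j < 2 powi 0" by (intro power_int_strict_increasing) auto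
  then have P: "0 < (2::real) powi j" "(2::real) powi j < 1" by auto
  define a :: "real^'d" where "a = (\<chi> i. of_int (k i) / 2 powi j)"
  have "a \<in> dyadic_cube j k" unfolding a_def by (rule dyadic_cube_corner)
  moreover have "(\<chi> i. a $ i + 1) \<in> dyadic_cube j k"
    using P unfolding mem_dyadic_cube_iff a_def by (simp add: field_simps)
  ultimately have "0 \<le> a $ i \<and> a $ i + 1 < 1" for i using assms by force
  then show False by force
qed

lemma floor_mult_frac:
  fixes P :: int and t :: real
  assumes "P > 0"
  shows "\<lfloor>of_int P * frac t\<rfloor> = \<lfloor>of_int P * t\<rfloor> mod P"
proof -
  have "of_int P * frac t = of_int P * t - of_int (P * \<lfloor>t\<rfloor>)" by (simp add: frac_def algebra_simps)
  then have eq: "\<lfloor>of_int P * frac t\<rfloor> = \<lfloor>of_int P * t\<rfloor> - P * \<lfloor>t\<rfloor>"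
    by (metis floor_diff_of_int)
  have "0 \<le> of_int P * frac t" "of_int P * frac t < of_int P"
    using assms frac_ge_0[of t] frac_lt_1[of t] by auto
  then have "0 \<le> \<lfloor>of_int P * frac t\<rfloor>" "\<lfloor>of_int P * frac t\<rfloor> < P" by linarith+
  then show ?thesis unfolding eq by (metis mod_pos_pos_trivial mod_mult_self2 diff_conv_add_uminus mult_minus_right)
qed

lemma floor_mult_frac_perturb:
  fixes P :: int and y z :: real
  assumes "P > 0" and "\<bar>z\<bar> \<le> 1 / of_int P"
  shows "\<lfloor>of_int P * frac (y + z)\<rfloor> \<in> (\<lambda>e. (\<lfloor>of_int P * y\<rfloor> + e) mod P) ` {-1, 0, 1}"
proof -
  have "\<bar>of_int P * z\<bar> \<le> 1"
    using assms by (simp add: abs_mult field_simps)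
  then have "\<lfloor>of_int P * y + of_int P * z\<rfloor> - \<lfloor>of_int P * y\<rfloor> \<in> {-1, 0, 1}" by auto linarith+
  then show ?thesis
    unfolding floor_mult_frac[OF \<open>P > 0\<close>] distrib_left
    by (rule image_eqI[rotated]) simp
qed

lemma frac_window_shift:
  fixes y z c s w :: real
  assumes "c \<le> frac (y + z)" "frac (y + z) < c + s" "\<bar>z\<bar> \<le> w" "s + 2 * w \<le> 1"
  shows "frac (y - (c - w)) < s + 2 * w"
proof -
  have "y - (c - w) = (frac (y + z) - c + (w - z)) + of_int \<lfloor>y + z\<rfloor>"
    by (simp add: frac_def)
  then have "frac (y - (c - w)) = frac ((frac (y + z) - c + (w - z)) + of_int \<lfloor>y + z\<rfloor>)"
    by (rule arg_cong)
  also have "\<dots> = frac (y + z) - c + (w - z)"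
    using assms by (simp add: frac_eq)
  finally show ?thesis using assms by linarith
qed

lemma frac_mult_eq_mod_plus:
  fixes a q :: nat and t p :: real
  assumes "p \<in> \<int>"
  shows "frac (real a * t) = frac (real (a mod q) * t + real (a div q) * (real q * t - p))"
proof -
  have "real a = real (a mod q) + real (a div q) * real q"
    by (metis of_nat_add of_nat_mult mod_div_mult_eq)
  then have "real a * t = (real (a mod q) * t + real (a div q) * (real q * t - p)) + real (a div q) * p"
    by (simp add: algebra_simps)
  moreover have "real (a div q) * p \<in> \<int>" using assms by simp
  ultimately show ?thesis by (simp only: frac_add_int_right)
qed

section \<open>Returns of a Kronecker sequence to a window\<close>

lemma frac_translates_separated:
  fixes u t t' M M' \<sigma> \<epsilon> :: real and k l m :: nat
  assumes window: "frac (u - t) < \<sigma>" "frac (u - t') < \<sigma>"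
    and approx: "\<bar>t - (M + k / m)\<bar> < \<epsilon>" "\<bar>t' - (M' + l / m)\<bar> < \<epsilon>"
    and ints: "M \<in> \<int>" "M' \<in> \<int>"
    and "k < m" "l < m" "\<sigma> + 2 * \<epsilon> \<le> 1 / m"
  shows "k = l"
proof -
  define e where "e = (t' - (M' + l / m)) - (t - (M + k / m)) + frac (u - t') - frac (u - t)"
  have small: "\<bar>e\<bar> < 1 / m"
    using approx frac_ge_0[of "u - t"] frac_ge_0[of "u - t'"] window \<open>\<sigma> + 2 * \<epsilon> \<le> 1 / m\<close>
    unfolding e_def by linarith
  have "of_int \<lfloor>u - t\<rfloor> - of_int \<lfloor>u - t'\<rfloor> + M - M' = (real l - real k) / m + e"
    unfolding e_def frac_def using \<open>k < m\<close> by (simp add: field_simps)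
  moreover have "of_int \<lfloor>u - t\<rfloor> - of_int \<lfloor>u - t'\<rfloor> + M - M' \<in> \<int>"
    using ints by (intro Ints_diff Ints_add) simp_all
  moreover have "\<bar>(real l - real k) / m\<bar> \<le> 1 - 1 / m"
    using \<open>k < m\<close> \<open>l < m\<close> by (simp add: field_simps abs_le_iff)
  moreover have "\<bar>(real l - real k) / m + e\<bar> < 1"
    using calculation(3) small abs_triangle_ineq[of "(real l - real k) / m" e] by linarith
  ultimately have "(real l - real k) / m + e = 0"
    by (intro Ints_nonzero_abs_less1) auto
  then have "\<bar>real l - real k\<bar> / m < 1 / m"
    using small by (simp add: eq_neg_iff_add_eq_0)
  then have "\<bar>real l - real k\<bar> < 1" by (simp add: divide_less_cancel)
  then have "real l < real (k + 1)" "real k < real (l + 1)" by (simp_all add: abs_less_iff)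
  then show "k = l" by (simp only: of_nat_less_iff)
qed

lemma card_window_returns_le:
  fixes x c :: "real^'d" and m :: nat and \<sigma> :: real
  assumes indep: "rat_independent_with_1 x" and "m > 0" and "\<sigma> < 1 / m"
  obtains T :: nat where
    "\<And>q. card {r. r < q \<and> (\<forall>i. frac (real r * x $ i - c $ i) < \<sigma>)} * m ^ CARD('d) \<le> q + T"
proof -
  define \<epsilon> where "\<epsilon> = (1 / m - \<sigma>) / 2"
  have "\<epsilon> > 0" and "\<sigma> + 2 * \<epsilon> = 1 / m" using assms unfolding \<epsilon>_def by (simp_all add: field_simps)
  define G :: "('d \<Rightarrow> nat) set" where "G = PiE UNIV (\<lambda>_. {..<m})"
  have "finite G" unfolding G_def by (simp add: finite_PiE)
  have card_G: "card G = m ^ CARD('d)" unfolding G_def by (simp add: card_PiE)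
  have "\<exists>s::int. \<forall>i. \<exists>M::int. \<bar>of_int s * x $ i - of_int M - real (k i) / m\<bar> < \<epsilon>" for k :: "'d \<Rightarrow> nat"
    by (rule kronecker_approx_vec[OF indep \<open>\<epsilon> > 0\<close>, of "\<chi> i. real (k i) / m"]) auto
  then obtain t :: "('d \<Rightarrow> nat) \<Rightarrow> int" where
    t: "\<And>k i. \<exists>M::int. \<bar>of_int (t k) * x $ i - (of_int M + real (k i) / m)\<bar> < \<epsilon>"
    by (metis diff_diff_eq)
  define T0 where "T0 = Max ((\<lambda>k. \<bar>t k\<bar>) ` G)"
  have T0: "\<bar>t k\<bar> \<le> T0" if "k \<in> G" for k unfolding T0_def using \<open>finite G\<close> that by auto
  show ?thesis
  proof (rule that[of "nat (2 * T0)"])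
    fix q
    define R where "R = {r. r < q \<and> (\<forall>i. frac (real r * x $ i - c $ i) < \<sigma>)}"
    have window: "frac ((of_int (int r + t k) * x $ i - c $ i) - of_int (t k) * x $ i) < \<sigma>"
      if "r \<in> R" for r k i
      using that unfolding R_def by (simp add: algebra_simps)
    txt \<open>The translates \<open>t k\<close> move the window to positions \<open>\<approx> k/m\<close> modulo 1, which are pairwise
      too far apart for a point \<open>int r + t k\<close> to be recovered from two different grid points \<open>k\<close>.\<close>
    have inj: "inj_on (\<lambda>(k, r). int r + t k) (G \<times> R)"
    proof (rule inj_onI, clarify)
      fix k r l r' assume kr: "k \<in> G" "r \<in> R" "l \<in> G" "r' \<in> R" and eq: "int r + t k = int r' + t l"
      have "k i = l i" for i
      proof -
        obtain M M' :: int where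
          "\<bar>of_int (t k) * x $ i - (of_int M + real (k i) / m)\<bar> < \<epsilon>"
          "\<bar>of_int (t l) * x $ i - (of_int M' + real (l i) / m)\<bar> < \<epsilon>"
          using t by blast
        moreover have "k i < m" "l i < m" using kr unfolding G_def by auto
        ultimately show ?thesis
          using window[OF \<open>r \<in> R\<close>, of k i] window[OF \<open>r' \<in> R\<close>, of l i] \<open>\<sigma> + 2 * \<epsilon> = 1 / m\<close>
          by (intro frac_translates_separated[where t = "of_int (t k) * x $ i" and t' = "of_int (t l) * x $ i"
                and M = "of_int M" and M' = "of_int M'" and \<epsilon> = \<epsilon> and \<sigma> = \<sigma>])
             (auto simp: eq)
      qed
      then have "k = l" by blast
      then show "k = l \<and> r = r'" using eq by simp
    qed
    moreover have "(\<lambda>(k, r). int r + t k) ` (G \<times> R) \<subseteq> {-T0..<int q + T0}"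
      using T0 unfolding R_def by fastforce
    ultimately have "card (G \<times> R) \<le> card {-T0..<int q + T0}"
      by (intro card_inj_on_le) auto
    moreover have "(\<lambda>_. 0) \<in> G" using \<open>m > 0\<close> unfolding G_def by auto
    then have "0 \<le> T0" using T0 by force
    ultimately show "card R * m ^ CARD('d) \<le> q + nat (2 * T0)"
      by (simp add: card_cartesian_product card_G mult.commute nat_add_distrib)
  qed
qed

section \<open>Counting occupied subcubes\<close>

locale residue_approximation =
  fixes a :: "nat \<Rightarrow> nat" and x p :: "real^'d" and q J N :: nat and \<eta> :: real
  assumes q_pos: "q > 0"
    and p_int: "\<And>i. p $ i \<in> \<int>"
    and approx: "\<And>i. \<bar>real q * x $ i - p $ i\<bar> \<le> \<eta>"
    and N_mult_\<eta>: "real N * \<eta> \<le> real q / 2 ^ J"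
    and a_le_N: "\<And>n. 1 \<le> n \<Longrightarrow> real n \<le> 2 ^ (CARD('d) * J) \<Longrightarrow> a n \<le> N"
begin

abbreviation orbit :: "nat \<Rightarrow> real^'d" where
  "orbit n \<equiv> frac_vec (real (a n) *\<^sub>R x)"

lemma orbit_near_residue:
  assumes "1 \<le> n" "real n \<le> 2 ^ (CARD('d) * J)"
  shows "\<exists>z. \<bar>z\<bar> \<le> 1 / 2 ^ J \<and> orbit n $ i = frac (real (a n mod q) * x $ i + z)"
proof (intro exI conjI)
  define m where "m = a n div q"
  have "real m * real q \<le> real N"
    using a_le_N[OF assms] unfolding m_def
    by (metis div_times_less_eq_dividend of_nat_le_iff of_nat_mult order_trans)
  then have "real m * real q * \<eta> \<le> real q / 2 ^ J"
    using N_mult_\<eta> approx[of i] by (meson abs_ge_zero mult_right_mono order_trans)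
  then have "real m * \<eta> \<le> 1 / 2 ^ J"
    using q_pos by (simp add: field_simps)
  moreover have "\<bar>real m * (real q * x $ i - p $ i)\<bar> \<le> real m * \<eta>"
    using approx[of i] by (simp add: abs_mult mult_left_mono)
  ultimately show "\<bar>real m * (real q * x $ i - p $ i)\<bar> \<le> 1 / 2 ^ J" by linarith
  show "orbit n $ i = frac (real (a n mod q) * x $ i + real m * (real q * x $ i - p $ i))"
    unfolding frac_vec_def m_def using frac_mult_eq_mod_plus[OF p_int] by simp
qed

lemma orbit_cell_near_residue:
  assumes "1 \<le> n" "real n \<le> 2 ^ (CARD('d) * J)" "orbit n \<in> dyadic_cube (int J) k"
  shows "k i \<in> (\<lambda>e. (\<lfloor>2 ^ J * (real (a n mod q) * x $ i)\<rfloor> + e) mod 2 ^ J) ` {-1, 0, 1}"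
proof -
  obtain z where "\<bar>z\<bar> \<le> 1 / of_int (2 ^ J)" "orbit n $ i = frac (real (a n mod q) * x $ i + z)"
    using orbit_near_residue[OF assms(1,2)] by auto
  moreover have "k i = \<lfloor>of_int (2 ^ J) * orbit n $ i\<rfloor>"
    using dyadic_cube_index[OF assms(3)] by simp
  ultimately show ?thesis using floor_mult_frac_perturb[of "2 ^ J"] by simp
qed

lemma card_dyadicM_le:
  assumes L: "L = dyadic_cube (int g) k0" and "g \<le> J" and "finite R"
    and visits: "\<And>n. 1 \<le> n \<Longrightarrow> real n \<le> 2 ^ (CARD('d) * J) \<Longrightarrow> orbit n \<in> L \<Longrightarrow> a n mod q \<in> R"
  shows "card (dyadicM orbit L (J - g)) \<le> 3 ^ CARD('d) * card R"
proof -
  define cells where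
    "cells r = PiE UNIV (\<lambda>i. (\<lambda>e. (\<lfloor>2 ^ J * (real r * x $ i)\<rfloor> + e) mod 2 ^ J) ` {-1, 0, 1 :: int})"
    for r :: nat
  have "finite (cells r)" for r unfolding cells_def by (simp add: finite_PiE)
  have card_cells: "card (cells r) \<le> 3 ^ CARD('d)" for r
  proof -
    have "card (cells r) = (\<Prod>i\<in>UNIV. card ((\<lambda>e. (\<lfloor>2 ^ J * (real r * x $ i)\<rfloor> + e) mod 2 ^ J) ` {-1, 0, 1 :: int}))"
      unfolding cells_def by (simp add: card_PiE)
    also have "\<dots> \<le> (\<Prod>i\<in>(UNIV :: 'd set). 3)"
      by (intro prod_mono conjI zero_le order_trans[OF card_image_le]) simp_all
    finally show ?thesis by simp
  qed
  have "dyadicM orbit L (J - g) \<subseteq> dyadic_cube (int J) ` (\<Union>r\<in>R. cells r)"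
  proof
    fix L' assume "L' \<in> dyadicM orbit L (J - g)"
    then obtain k n where L': "L' = dyadic_cube (int J) k" "L' \<subseteq> L"
      and n: "1 \<le> n" "real n \<le> 2 powi (int CARD('d) * int J)" "orbit n \<in> L'"
      using \<open>g \<le> J\<close> unfolding dyadicM_def is_dyadic_cube_def L by auto
    have n': "real n \<le> 2 ^ (CARD('d) * J)" using n(2) by (simp flip: of_nat_mult)
    have "k \<in> cells (a n mod q)"
      unfolding cells_def using orbit_cell_near_residue[OF n(1) n'] n(3) L' by auto
    moreover have "a n mod q \<in> R" using visits n(1) n' n(3) L' by blast
    ultimately show "L' \<in> dyadic_cube (int J) ` (\<Union>r\<in>R. cells r)" unfolding L' by blast
  qed
  then have "card (dyadicM orbit L (J - g)) \<le> card (\<Union>r\<in>R. cells r)"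
    using \<open>finite R\<close> \<open>\<And>r. finite (cells r)\<close>
    by (meson card_image_le card_mono finite_UN_I finite_imageI order_trans)
  also have "\<dots> \<le> (\<Sum>r\<in>R. card (cells r))" by (rule card_UN_le[OF \<open>finite R\<close>])
  also have "\<dots> \<le> (\<Sum>r\<in>R. 3 ^ CARD('d))" by (intro sum_mono card_cells)
  also have "\<dots> = 3 ^ CARD('d) * card R" by simp
  finally show ?thesis .
qed

text \<open>Enlarging the face \<open>[c, c + 2\<^sup>-\<^sup>g)\<close> of \<open>L\<close> by \<open>2\<^sup>-\<^sup>(\<^sup>g\<^sup>+\<^sup>2\<^sup>)\<close> on both sides absorbs the
  perturbation \<open>z\<close>, giving a window of width \<open>3 \<cdot> 2\<^sup>-\<^sup>(\<^sup>g\<^sup>+\<^sup>1\<^sup>) < 2\<^sup>-\<^sup>(\<^sup>g\<^sup>-\<^sup>1\<^sup>)\<close>.\<close>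

lemma residue_in_window:
  assumes L: "L = dyadic_cube (int g) k0" and "1 \<le> g" "g + 2 \<le> J"
    and n: "1 \<le> n" "real n \<le> 2 ^ (CARD('d) * J)" "orbit n \<in> L"
  shows "frac (real (a n mod q) * x $ i - (of_int (k0 i) / 2 ^ g - 1 / 2 ^ (g + 2))) < 3 / 2 ^ (g + 1)"
proof -
  obtain z where z: "\<bar>z\<bar> \<le> 1 / 2 ^ J" and orbit: "orbit n $ i = frac (real (a n mod q) * x $ i + z)"
    using orbit_near_residue[OF n(1,2)] by blast
  have "(2::real) ^ (g + 2) \<le> 2 ^ J" using \<open>g + 2 \<le> J\<close> by (intro power_increasing) auto
  then have "1 / 2 ^ J \<le> 1 / (2::real) ^ (g + 2)" by (intro divide_left_mono) auto
  then have "\<bar>z\<bar> \<le> 1 / 2 ^ (g + 2)" using z by linarith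
  moreover have "of_int (k0 i) / 2 ^ g \<le> orbit n $ i" "orbit n $ i < of_int (k0 i) / 2 ^ g + 1 / 2 ^ g"
    using n(3) unfolding L mem_dyadic_cube_iff by (simp_all add: field_simps)
  moreover have "(2::real) ^ 2 \<le> 2 ^ (g + 1)" using \<open>1 \<le> g\<close> by (intro power_increasing) auto
  then have "1 / 2 ^ g + 2 * (1 / 2 ^ (g + 2)) \<le> (1::real)" by (simp add: field_simps)
  ultimately have "frac (real (a n mod q) * x $ i - (of_int (k0 i) / 2 ^ g - 1 / 2 ^ (g + 2)))
      < 1 / 2 ^ g + 2 * (1 / 2 ^ (g + 2))"
    by (intro frac_window_shift) (auto simp: orbit)
  also have "\<dots> = 3 / 2 ^ (g + 1)" by (simp add: field_simps)
  finally show ?thesis .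
qed

lemma visited_residues_bound:
  assumes L: "L = dyadic_cube (int g) k0" and "g + 2 \<le> J"
    and returns: "1 \<le> g \<Longrightarrow>
      card {r. r < q \<and> (\<forall>i. frac (real r * x $ i - (of_int (k0 i) / 2 ^ g - 1 / 2 ^ (g + 2))) < 3 / 2 ^ (g + 1))}
        * (2 ^ (g - 1)) ^ CARD('d) \<le> 2 * q"
  obtains R where "finite R"
    and "\<And>n. 1 \<le> n \<Longrightarrow> real n \<le> 2 ^ (CARD('d) * J) \<Longrightarrow> orbit n \<in> L \<Longrightarrow> a n mod q \<in> R"
    and "real (card R) * 2 ^ (CARD('d) * g) \<le> 2 * 2 ^ CARD('d) * q"
proof (cases "g = 0")
  case True
  have "(1::real) \<le> 2 * 2 ^ CARD('d)" using one_le_power[of "2::real" "CARD('d)"] by linarith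
  then have "real q \<le> 2 * 2 ^ CARD('d) * q" using mult_right_mono[of 1 _ "real q"] by simp
  then show ?thesis using True q_pos by (intro that[of "{..<q}"]) auto
next
  case False
  define R where "R = {r. r < q \<and> (\<forall>i. frac (real r * x $ i - (of_int (k0 i) / 2 ^ g - 1 / 2 ^ (g + 2))) < 3 / 2 ^ (g + 1))}"
  have "card R * (2 ^ (g - 1)) ^ CARD('d) \<le> 2 * q"
    using returns False unfolding R_def by simp
  then have "real (card R * (2 ^ (g - 1)) ^ CARD('d)) \<le> real (2 * q)" by (simp only: of_nat_le_iff)
  then have "real (card R) * (2 ^ (g - 1)) ^ CARD('d) \<le> 2 * real q" by simp
  then have "real (card R) * (2 ^ (g - 1)) ^ CARD('d) * 2 ^ CARD('d) \<le> 2 * real q * 2 ^ CARD('d)"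
    by (intro mult_right_mono) simp_all
  moreover have "(2::real) ^ (CARD('d) * g) = (2 ^ (g - 1)) ^ CARD('d) * 2 ^ CARD('d)"
  proof -
    obtain h where "g = Suc h" using False not0_implies_Suc by blast
    then show ?thesis by (simp add: power_mult[symmetric] power_add[symmetric] algebra_simps)
  qed
  ultimately have "real (card R) * 2 ^ (CARD('d) * g) \<le> 2 * 2 ^ CARD('d) * q"
    by (simp add: algebra_simps)
  moreover have "a n mod q \<in> R" if "1 \<le> n" "real n \<le> 2 ^ (CARD('d) * J)" "orbit n \<in> L" for n
    using residue_in_window[OF L _ \<open>g + 2 \<le> J\<close>] that False q_pos unfolding R_def by simp
  moreover have "finite R" unfolding R_def by (rule finite_subset[of _ "{..<q}"]) auto
  ultimately show ?thesis using that by blast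
qed

lemma scaled_card_dyadicM_le:
  assumes L: "L = dyadic_cube (int g) k0" and "g + 2 \<le> J"
    and returns: "1 \<le> g \<Longrightarrow>
      card {r. r < q \<and> (\<forall>i. frac (real r * x $ i - (of_int (k0 i) / 2 ^ g - 1 / 2 ^ (g + 2))) < 3 / 2 ^ (g + 1))}
        * (2 ^ (g - 1)) ^ CARD('d) \<le> 2 * q"
  shows "2 powr (- real CARD('d) * real (J - g)) * card (dyadicM orbit L (J - g))
           \<le> 2 * 6 ^ CARD('d) * q / 2 ^ (CARD('d) * J)"
proof -
  define d where "d = CARD('d)"
  obtain R where "finite R" and visits: "\<And>n. 1 \<le> n \<Longrightarrow> real n \<le> 2 ^ (d * J) \<Longrightarrow> orbit n \<in> L \<Longrightarrow> a n mod q \<in> R"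
    and card_R: "real (card R) * 2 ^ (d * g) \<le> 2 * 2 ^ d * q"
    using visited_residues_bound[OF L \<open>g + 2 \<le> J\<close> returns] unfolding d_def by blast
  have "card (dyadicM orbit L (J - g)) \<le> 3 ^ d * card R"
    using card_dyadicM_le[OF L _ \<open>finite R\<close>] visits \<open>g + 2 \<le> J\<close> unfolding d_def by simp
  then have card_M: "real (card (dyadicM orbit L (J - g))) \<le> 3 ^ d * real (card R)"
    by (metis of_nat_le_iff of_nat_mult of_nat_numeral of_nat_power)
  have "- real d * real (J - g) = real (d * g) - real (d * J)"
    using \<open>g + 2 \<le> J\<close> by (simp add: of_nat_diff algebra_simps)
  then have "2 powr (- real d * real (J - g)) = 2 ^ (d * g) / 2 ^ (d * J)"
    by (simp only: powr_diff powr_realpow zero_less_numeral)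
  then have "2 powr (- real d * real (J - g)) * card (dyadicM orbit L (J - g))
      \<le> 3 ^ d * (real (card R) * 2 ^ (d * g)) / 2 ^ (d * J)"
    using card_M by (simp add: divide_right_mono mult_left_mono mult.commute mult.left_commute)
  also have "\<dots> \<le> 3 ^ d * (2 * 2 ^ d * q) / 2 ^ (d * J)"
    using card_R by (intro divide_right_mono mult_left_mono) auto
  also have "\<dots> = 2 * 6 ^ d * q / 2 ^ (d * J)"
    by (simp add: power_mult_distrib[symmetric])
  finally show ?thesis unfolding d_def .
qed

end

lemma card_counting_le:
  fixes a :: "nat \<Rightarrow> nat"
  assumes a_pos: "\<forall>n\<ge>1. a n > 0" and a_incr: "\<forall>m n. 1 \<le> m \<longrightarrow> m < n \<longrightarrow> a m < a n"
  shows "card {n. 1 \<le> n \<and> a n \<le> N} \<le> N"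
proof -
  have "inj_on a {n. 1 \<le> n \<and> a n \<le> N}"
  proof (rule inj_onI, rule ccontr)
    fix m n assume "m \<in> {n. 1 \<le> n \<and> a n \<le> N}" "n \<in> {n. 1 \<le> n \<and> a n \<le> N}" "a m = a n" "m \<noteq> n"
    then show False using a_incr by (metis less_irrefl linorder_neqE_nat mem_Collect_eq)
  qed
  moreover have "a ` {n. 1 \<le> n \<and> a n \<le> N} \<subseteq> {1..N}" using a_pos by force
  ultimately have "card {n. 1 \<le> n \<and> a n \<le> N} \<le> card {1..N}" by (intro card_inj_on_le) auto
  then show ?thesis by simp
qed

lemma le_card_counting_imp_le:
  fixes a :: "nat \<Rightarrow> nat"
  assumes a_incr: "\<forall>m n. 1 \<le> m \<longrightarrow> m < n \<longrightarrow> a m < a n"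
    and "1 \<le> n" and "n \<le> card {m. 1 \<le> m \<and> a m \<le> N}"
  shows "a n \<le> N"
proof (rule ccontr)
  assume "\<not> a n \<le> N"
  have "m < n" if "1 \<le> m" "a m \<le> N" for m
  proof (rule ccontr)
    assume "\<not> m < n"
    then have "a n \<le> a m" using a_incr \<open>1 \<le> n\<close> by (metis le_neq_implies_less less_imp_le not_less)
    then show False using that \<open>\<not> a n \<le> N\<close> by simp
  qed
  then have "{m. 1 \<le> m \<and> a m \<le> N} \<subseteq> {1..<n}" by auto
  then have "card {m. 1 \<le> m \<and> a m \<le> N} \<le> n - 1"
    by (metis card_atLeastLessThan card_mono finite_atLeastLessThan)
  then show False using assms by linarith
qed

lemma frequently_le_imp_Liminf_le:
  fixes f :: "_ \<Rightarrow> 'a :: complete_linorder"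
  assumes "frequently (\<lambda>n. f n \<le> B) F"
  shows "Liminf F f \<le> B"
proof (rule ccontr)
  assume "\<not> Liminf F f \<le> B"
  then have "eventually (\<lambda>n. B < f n) F" by (intro less_LiminfD) simp
  then have "eventually (\<lambda>n. \<not> f n \<le> B) F" by (rule eventually_mono) simp
  then show False using assms unfolding frequently_def by blast
qed

lemma Liminf_less_imp_frequently_less:
  fixes f :: "_ \<Rightarrow> 'a :: complete_linorder"
  assumes "Liminf F f < B"
  shows "frequently (\<lambda>n. f n < B) F"
proof -
  obtain y where "y < B" "\<not> eventually (\<lambda>n. y < f n) F"
    using assms le_Liminf_iff[of B F f] by (auto simp: not_le)
  show ?thesis
    unfolding frequently_def
  proof
    assume "eventually (\<lambda>n. \<not> f n < B) F"
    then have "eventually (\<lambda>n. y < f n) F"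
      by (rule eventually_mono) (use \<open>y < B\<close> in \<open>auto simp: not_less\<close>)
    then show False using \<open>\<not> eventually (\<lambda>n. y < f n) F\<close> by blast
  qed
qed

lemma supnorm_ge_component: "\<bar>z $ i\<bar> \<le> supnorm z"
  unfolding supnorm_def by (rule Max_ge) auto

lemma lattice_dist_set_nonempty: "{supnorm (z - p) |p. \<forall>i. p $ i \<in> \<int>} \<noteq> {}"
proof -
  have "supnorm (z - 0) \<in> {supnorm (z - p) |p. \<forall>i. p $ i \<in> \<int>}" by fastforce
  then show ?thesis by blast
qed

lemma lattice_dist_nonneg: "0 \<le> lattice_dist z"
  unfolding lattice_dist_def
  by (rule cInf_greatest[OF lattice_dist_set_nonempty])
     (auto intro: order_trans[OF abs_ge_zero supnorm_ge_component])

lemma lattice_dist_lessE: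
  assumes "lattice_dist z < \<eta>"
  obtains p where "\<And>i. p $ i \<in> \<int>" "\<And>i. \<bar>z $ i - p $ i\<bar> < \<eta>"
proof -
  obtain p where "\<forall>i. p $ i \<in> \<int>" "supnorm (z - p) < \<eta>"
    using cInf_lessD[OF lattice_dist_set_nonempty] assms unfolding lattice_dist_def by blast
  then show ?thesis
    using that supnorm_ge_component[of "z - p"] by (metis order_le_less_trans vector_minus_component)
qed

lemma kappa_nonneg: "0 \<le> kappa x"
  unfolding kappa_def
  by (intro Liminf_bounded always_eventually allI) (simp add: lattice_dist_nonneg)

lemma power2_bracketE:
  fixes X :: real
  assumes "1 \<le> X"
  obtains J :: nat where "2 ^ J \<le> X" "X < 2 ^ (J + 1)"
proof -
  define J where "J = nat \<lfloor>log 2 X\<rfloor>"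
  have "0 \<le> \<lfloor>log 2 X\<rfloor>" using assms by simp
  then have "of_int \<lfloor>log 2 X\<rfloor> = real J" unfolding J_def by simp
  moreover have "2 powr (of_int \<lfloor>log 2 X\<rfloor>) \<le> X \<and> X < 2 powr (of_int \<lfloor>log 2 X\<rfloor> + 1)"
    using floor_log_eq_powr_iff[of X 2 "\<lfloor>log 2 X\<rfloor>"] assms by simp
  ultimately show ?thesis
    by (intro that[of J]) (simp_all add: powr_realpow[symmetric] powr_add)
qed

lemma nat_ceiling_le_double:
  fixes y :: real
  assumes "1 \<le> y"
  shows "real (nat \<lceil>y\<rceil>) \<le> 2 * y"
  using assms by linarith

lemma scale_bounds:
  fixes \<kappa> \<delta> \<nu> \<beta> :: real and d J :: nat
  assumes "0 < \<kappa>" "0 < \<delta>" "0 < \<nu>" "0 < \<beta>" and \<beta>: "\<beta> ^ (d + 1) = \<delta> / (2 * \<kappa>)"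
    and J: "2 ^ J \<le> \<beta> * \<nu>" "\<beta> * \<nu> < 2 ^ (J + 1)"
  shows "2 * 2 ^ (d * J) / \<delta> * (\<kappa> / \<nu>) \<le> \<nu> ^ d / 2 ^ J"
    and "\<nu> ^ d / 2 ^ (d * J) \<le> 2 ^ d / \<beta> ^ d"
proof -
  have "(2::real) ^ (d * J) * 2 ^ J = (2 ^ J) ^ (d + 1)"
    by (simp add: power_mult[symmetric] power_add[symmetric] algebra_simps)
  also have "\<dots> \<le> (\<beta> * \<nu>) ^ (d + 1)" using J(1) by (intro power_mono) auto
  also have "\<dots> = \<beta> ^ (d + 1) * (\<nu> ^ d * \<nu>)" by (simp add: power_mult_distrib)
  finally have "2 ^ (d * J) * 2 ^ J \<le> \<delta> / (2 * \<kappa>) * (\<nu> ^ d * \<nu>)" unfolding \<beta> .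
  then have "2 * \<kappa> * (2 ^ (d * J) * 2 ^ J) \<le> \<delta> * (\<nu> ^ d * \<nu>)"
    using assms by (simp add: field_simps)
  then show "2 * 2 ^ (d * J) / \<delta> * (\<kappa> / \<nu>) \<le> \<nu> ^ d / 2 ^ J"
    using assms by (simp add: field_simps)
  have "\<nu> ^ d \<le> (2 ^ (J + 1) / \<beta>) ^ d"
    using J(2) assms by (intro power_mono) (simp_all add: field_simps)
  also have "\<dots> = 2 ^ (d * J) * (2 ^ d / \<beta> ^ d)"
    by (simp add: power_divide power_add power_mult_distrib) (metis mult.commute power_mult)
  finally show "\<nu> ^ d / 2 ^ (d * J) \<le> 2 ^ d / \<beta> ^ d" by (simp add: field_simps)
qed

lemma root_exponent_powers:
  fixes y :: real and d :: nat
  assumes "0 < y"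
  shows "(y powr (1 / (real d + 1))) ^ (d + 1) = y"
    and "1 / (y powr (1 / (real d + 1))) ^ d = (1 / y) powr (real d / (real d + 1))"
proof -
  have "(y powr (1 / (real d + 1))) ^ (d + 1) = (y powr (1 / (real d + 1))) powr real (d + 1)"
    using assms by (intro powr_realpow[symmetric]) simp
  also have "\<dots> = y" using assms unfolding powr_powr by (simp add: field_simps)
  finally show "(y powr (1 / (real d + 1))) ^ (d + 1) = y" .
  show "1 / (y powr (1 / (real d + 1))) ^ d = (1 / y) powr (real d / (real d + 1))"
    using assms by (simp add: powr_realpow[symmetric] powr_powr powr_divide)
qed

lemma le_root_if_pow_le:
  fixes y z :: real and d :: nat
  assumes "0 < y" "y ^ d \<le> z" "0 < d"
  shows "y \<le> z powr (1 / real d)"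
proof -
  have "(y ^ d) powr (1 / real d) \<le> z powr (1 / real d)"
    using assms by (intro powr_mono2) auto
  moreover have "(y ^ d) powr (1 / real d) = y"
    using assms by (simp add: powr_realpow[symmetric] powr_powr)
  ultimately show ?thesis by simp
qed

lemma window_returns_bound:
  fixes x :: "real^'d" and k0 :: "'d \<Rightarrow> int"
  assumes "rat_independent_with_1 x"
  obtains T where "\<And>q. 1 \<le> g \<Longrightarrow> T \<le> q \<Longrightarrow>
    card {r. r < q \<and> (\<forall>i. frac (real r * x $ i - (of_int (k0 i) / 2 ^ g - 1 / 2 ^ (g + 2))) < 3 / 2 ^ (g + 1))}
      * (2 ^ (g - 1)) ^ CARD('d) \<le> 2 * q"
proof (cases "1 \<le> g")
  case True
  define c :: "real^'d" where "c = (\<chi> i. of_int (k0 i) / 2 ^ g - 1 / 2 ^ (g + 2))"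
  have window: "3 / 2 ^ (g + 1) < 1 / real (2 ^ (g - 1))"
    using True by (cases g) (simp_all add: field_simps)
  obtain T where T: "\<And>q. card {r. r < q \<and> (\<forall>i. frac (real r * x $ i - c $ i) < 3 / 2 ^ (g + 1))}
      * (2 ^ (g - 1)) ^ CARD('d) \<le> q + T"
    by (rule card_window_returns_le[OF assms _ window, of c]) (simp, blast)
  show ?thesis
  proof (rule that[of T])
    fix q assume "T \<le> q"
    then show "card {r. r < q \<and> (\<forall>i. frac (real r * x $ i - (of_int (k0 i) / 2 ^ g - 1 / 2 ^ (g + 2)))
        < 3 / 2 ^ (g + 1))} * (2 ^ (g - 1)) ^ CARD('d) \<le> 2 * q"
      using T[of q] unfolding c_def by simp
  qed
qed (use that in simp)

lemma residue_approximation_from_density: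
  fixes a :: "nat \<Rightarrow> nat" and x p :: "real^'d"
  assumes a_incr: "\<forall>m n. 1 \<le> m \<longrightarrow> m < n \<longrightarrow> a m < a n"
    and dens: "\<And>N. N' \<le> N \<Longrightarrow> \<delta> < real (card {n. 1 \<le> n \<and> a n \<le> N}) / real N"
    and "0 < \<delta>" "\<delta> \<le> 1" "N' \<le> J"
    and "0 < q" "\<And>i. p $ i \<in> \<int>" "\<And>i. \<bar>real q * x $ i - p $ i\<bar> \<le> \<eta>"
    and scale: "2 * 2 ^ (CARD('d) * J) / \<delta> * \<eta> \<le> real q / 2 ^ J"
  shows "residue_approximation a x p q J (nat \<lceil>2 ^ (CARD('d) * J) / \<delta>\<rceil>) \<eta>"
proof
  define Y where "Y = 2 ^ (CARD('d) * J) / \<delta>"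
  define N where "N = nat \<lceil>Y\<rceil>"
  have "\<delta> \<le> 2 ^ (CARD('d) * J)" using \<open>\<delta> \<le> 1\<close> by (meson one_le_numeral one_le_power order_trans)
  then have "1 \<le> Y" unfolding Y_def using \<open>0 < \<delta>\<close> by (simp add: le_divide_eq_1_pos)
  have "0 \<le> \<eta>" using assms(8)[of undefined] by linarith
  have "real N * \<eta> \<le> 2 * Y * \<eta>"
    unfolding N_def using nat_ceiling_le_double[OF \<open>1 \<le> Y\<close>] \<open>0 \<le> \<eta>\<close> by (rule mult_right_mono)
  then show "real (nat \<lceil>2 ^ (CARD('d) * J) / \<delta>\<rceil>) * \<eta> \<le> real q / 2 ^ J"
    using scale unfolding N_def Y_def by simp
  have "2 ^ (CARD('d) * J) = \<delta> * Y" unfolding Y_def using \<open>0 < \<delta>\<close> by simp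
  also have "\<dots> \<le> \<delta> * N" unfolding N_def using \<open>0 < \<delta>\<close> real_nat_ceiling_ge by simp
  finally have N_ge: "2 ^ (CARD('d) * J) \<le> \<delta> * N" .
  have "real N' \<le> real J" using \<open>N' \<le> J\<close> by simp
  also have "real J < 2 ^ J" using less_exp[of J] by (metis of_nat_less_iff of_nat_numeral of_nat_power)
  also have "(2::real) ^ J \<le> 2 ^ (CARD('d) * J)" by (intro power_increasing) auto
  also have "\<dots> \<le> \<delta> * N" by (rule N_ge)
  also have "\<dots> \<le> N" using \<open>0 < \<delta>\<close> \<open>\<delta> \<le> 1\<close> by (intro mult_left_le_one_le) auto
  finally have "N' \<le> N" "0 < N" by simp_all
  fix n assume n: "1 \<le> n" "real n \<le> 2 ^ (CARD('d) * J)"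
  then have "real n \<le> \<delta> * N" using N_ge by linarith
  also have "\<dots> < real (card {n. 1 \<le> n \<and> a n \<le> N})"
    using dens[OF \<open>N' \<le> N\<close>] \<open>0 < N\<close> by (simp add: field_simps)
  finally show "a n \<le> nat \<lceil>2 ^ (CARD('d) * J) / \<delta>\<rceil>"
    using le_card_counting_imp_le[OF a_incr n(1)] unfolding N_def Y_def by simp
qed (use assms in auto)

lemma scaled_card_dyadicM_le_at_good_denominator:
  fixes a :: "nat \<Rightarrow> nat" and x :: "real^'d" and k0 :: "'d \<Rightarrow> int" and \<kappa> \<delta> :: real
  assumes \<beta>: "\<beta> = (\<delta> / (2 * \<kappa>)) powr (1 / (real CARD('d) + 1))"
    and a_incr: "\<forall>m n. 1 \<le> m \<longrightarrow> m < n \<longrightarrow> a m < a n"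
    and L: "L = dyadic_cube (int g) k0"
    and returns: "1 \<le> g \<Longrightarrow>
      card {r. r < q \<and> (\<forall>i. frac (real r * x $ i - (of_int (k0 i) / 2 ^ g - 1 / 2 ^ (g + 2))) < 3 / 2 ^ (g + 1))}
        * (2 ^ (g - 1)) ^ CARD('d) \<le> 2 * q"
    and dens: "\<And>N. N0 \<le> N \<Longrightarrow> \<delta> < real (card {n. 1 \<le> n \<and> a n \<le> N}) / real N"
    and "0 < \<kappa>" "0 < \<delta>" "\<delta> \<le> 1"
    and q: "0 < q" "real q powr (1 / real CARD('d)) * lattice_dist (real q *\<^sub>R x) < \<kappa>"
    and large: "2 ^ (g + 2 + N0 + j0) \<le> \<beta> * real q powr (1 / real CARD('d))"
  shows "\<exists>j\<ge>j0. 2 powr (- real CARD('d) * real j) *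
           real (card (dyadicM (\<lambda>n. frac_vec (real (a n) *\<^sub>R x)) L j))
         \<le> 2 * 12 ^ CARD('d) * (2 * \<kappa> / \<delta>) powr (real CARD('d) / (real CARD('d) + 1))"
proof -
  define d where "d = CARD('d)"
  define \<nu> where "\<nu> = real q powr (1 / real d)"
  have "0 < \<nu>" unfolding \<nu>_def using q by simp
  have \<nu>_pow: "\<nu> ^ d = real q"
    using q by (simp add: \<nu>_def d_def powr_realpow[symmetric] powr_powr)
  have "0 < \<beta>" unfolding \<beta> using assms by simp
  have \<beta>_pow: "\<beta> ^ (d + 1) = \<delta> / (2 * \<kappa>)"
    unfolding \<beta> d_def by (rule root_exponent_powers(1)) (use assms in simp)
  obtain p where p_int: "\<And>i. p $ i \<in> \<int>" and p_approx: "\<And>i. \<bar>real q * x $ i - p $ i\<bar> < \<kappa> / \<nu>"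
    using lattice_dist_lessE[of "real q *\<^sub>R x" "\<kappa> / \<nu>"] q \<open>0 < \<nu>\<close>
    unfolding \<nu>_def d_def by (auto simp: field_simps)
  have "1 \<le> \<beta> * \<nu>" using large unfolding \<nu>_def d_def by (meson one_le_numeral one_le_power order_trans)
  then obtain J where J: "2 ^ J \<le> \<beta> * \<nu>" "\<beta> * \<nu> < 2 ^ (J + 1)"
    using power2_bracketE by blast
  have "(2::real) ^ (g + 2 + N0 + j0) < 2 ^ (J + 1)"
    using large J(2) unfolding \<nu>_def d_def by linarith
  then have J_large: "g + 2 + N0 + j0 \<le> J"
    by (subst (asm) power_strict_increasing_iff) auto
  interpret residue_approximation a x p q J "nat \<lceil>2 ^ (d * J) / \<delta>\<rceil>" "\<kappa> / \<nu>"
    unfolding d_def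
  proof (rule residue_approximation_from_density[where N' = N0, OF a_incr dens \<open>0 < \<delta>\<close> \<open>\<delta> \<le> 1\<close> _ q(1) p_int])
    show "N0 \<le> J" using J_large by simp
    show "\<bar>real q * x $ i - p $ i\<bar> \<le> \<kappa> / \<nu>" for i using p_approx[of i] by simp
    show "2 * 2 ^ (CARD('d) * J) / \<delta> * (\<kappa> / \<nu>) \<le> real q / 2 ^ J"
      using scale_bounds(1)[OF \<open>0 < \<kappa>\<close> \<open>0 < \<delta>\<close> \<open>0 < \<nu>\<close> \<open>0 < \<beta>\<close> \<beta>_pow J] \<nu>_pow
      unfolding d_def by simp
  qed
  have "2 powr (- real d * real (J - g)) * real (card (dyadicM orbit L (J - g)))
      \<le> 2 * 6 ^ d * (\<nu> ^ d / 2 ^ (d * J))"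
    using scaled_card_dyadicM_le[OF L _ returns] J_large \<nu>_pow unfolding d_def by simp
  also have "\<dots> \<le> 2 * 6 ^ d * (2 ^ d * (1 / \<beta> ^ d))"
    using scale_bounds(2)[OF \<open>0 < \<kappa>\<close> \<open>0 < \<delta>\<close> \<open>0 < \<nu>\<close> \<open>0 < \<beta>\<close> \<beta>_pow J]
    by (intro mult_left_mono) auto
  also have "1 / \<beta> ^ d = (2 * \<kappa> / \<delta>) powr (real d / (real d + 1))"
    unfolding \<beta> d_def using root_exponent_powers(2)[of "\<delta> / (2 * \<kappa>)"] assms by simp
  also have "2 * 6 ^ d * (2 ^ d * (2 * \<kappa> / \<delta>) powr (real d / (real d + 1)))
      = 2 * 12 ^ d * (2 * \<kappa> / \<delta>) powr (real d / (real d + 1))"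
    by (simp add: power_mult_distrib[symmetric])
  finally show ?thesis
    using J_large unfolding d_def by (intro exI[of _ "J - g"]) simp
qed

lemma frequently_scaled_card_dyadicM_le:
  fixes a :: "nat \<Rightarrow> nat" and x :: "real^'d" and \<kappa> \<delta> :: real
  assumes a_pos: "\<forall>n\<ge>1. a n > 0"
    and a_incr: "\<forall>m n. 1 \<le> m \<longrightarrow> m < n \<longrightarrow> a m < a n"
    and indep: "rat_independent_with_1 x"
    and L_dyadic: "is_dyadic_cube L" and L_sub: "L \<subseteq> {y. \<forall>i. 0 \<le> y $ i \<and> y $ i < 1}"
    and "0 < \<kappa>" "0 < \<delta>"
    and approx: "frequently (\<lambda>q. real q powr (1 / real CARD('d)) * lattice_dist (real q *\<^sub>R x) < \<kappa>) sequentially"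
    and dens: "eventually (\<lambda>N. \<delta> < real (card {n. 1 \<le> n \<and> a n \<le> N}) / real N) sequentially"
  shows "frequently (\<lambda>j. 2 powr (- real CARD('d) * real j) *
           real (card (dyadicM (\<lambda>n. frac_vec (real (a n) *\<^sub>R x)) L j))
         \<le> 2 * 12 ^ CARD('d) * (2 * \<kappa> / \<delta>) powr (real CARD('d) / (real CARD('d) + 1))) sequentially"
proof -
  obtain j k0 where L: "L = dyadic_cube j k0" using L_dyadic unfolding is_dyadic_cube_def by blast
  have "0 \<le> j" using L_sub unfolding L by (rule dyadic_cube_in_unit_cube_generation_nonneg)
  then obtain g where L: "L = dyadic_cube (int g) k0" using L nonneg_eq_int by blast
  obtain N0 where N0: "\<And>N. N0 \<le> N \<Longrightarrow> \<delta> < real (card {n. 1 \<le> n \<and> a n \<le> N}) / real N"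
    using dens unfolding eventually_sequentially by blast
  have "\<delta> < real (card {n. 1 \<le> n \<and> a n \<le> max N0 1}) / real (max N0 1)" by (rule N0) simp
  also have "\<dots> \<le> 1" using card_counting_le[OF a_pos a_incr, of "max N0 1"] by simp
  finally have "\<delta> \<le> 1" by simp
  obtain T where T: "\<And>q. 1 \<le> g \<Longrightarrow> T \<le> q \<Longrightarrow>
    card {r. r < q \<and> (\<forall>i. frac (real r * x $ i - (of_int (k0 i) / 2 ^ g - 1 / 2 ^ (g + 2))) < 3 / 2 ^ (g + 1))}
      * (2 ^ (g - 1)) ^ CARD('d) \<le> 2 * q"
    using window_returns_bound[OF indep] by blast
  define \<beta> where "\<beta> = (\<delta> / (2 * \<kappa>)) powr (1 / (real CARD('d) + 1))"
  have "0 < \<beta>" unfolding \<beta>_def using \<open>0 < \<kappa>\<close> \<open>0 < \<delta>\<close> by simp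
  show ?thesis
    unfolding frequently_sequentially
  proof
    fix j0
    define Q where "Q = max (T + 1) (nat \<lceil>(2 ^ (g + 2 + N0 + j0) / \<beta>) ^ CARD('d)\<rceil>)"
    obtain q where "Q \<le> q" and q: "real q powr (1 / real CARD('d)) * lattice_dist (real q *\<^sub>R x) < \<kappa>"
      using approx unfolding frequently_sequentially by blast
    then have "0 < q" "T \<le> q" unfolding Q_def by auto
    have "(2 ^ (g + 2 + N0 + j0) / \<beta>) ^ CARD('d) \<le> real q"
      using \<open>Q \<le> q\<close> unfolding Q_def by linarith
    then have "2 ^ (g + 2 + N0 + j0) / \<beta> \<le> real q powr (1 / real CARD('d))"
      using \<open>0 < \<beta>\<close> by (intro le_root_if_pow_le) auto
    then have large: "2 ^ (g + 2 + N0 + j0) \<le> \<beta> * real q powr (1 / real CARD('d))"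
      using \<open>0 < \<beta>\<close> by (simp add: field_simps)
    show "\<exists>j\<ge>j0. 2 powr (- real CARD('d) * real j) *
           real (card (dyadicM (\<lambda>n. frac_vec (real (a n) *\<^sub>R x)) L j))
         \<le> 2 * 12 ^ CARD('d) * (2 * \<kappa> / \<delta>) powr (real CARD('d) / (real CARD('d) + 1))"
      by (rule scaled_card_dyadicM_le_at_good_denominator[OF \<beta>_def a_incr L T[OF _ \<open>T \<le> q\<close>] N0
            \<open>0 < \<kappa>\<close> \<open>0 < \<delta>\<close> \<open>\<delta> \<le> 1\<close> \<open>0 < q\<close> q large])
  qed
qed

lemma Liminf_scaled_card_dyadicM_le:
  fixes a :: "nat \<Rightarrow> nat" and x :: "real^'d" and \<kappa> \<delta> \<delta>' :: real
  assumes a_pos: "\<forall>n\<ge>1. a n > 0"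
    and a_incr: "\<forall>m n. 1 \<le> m \<longrightarrow> m < n \<longrightarrow> a m < a n"
    and dens: "Liminf sequentially (\<lambda>N::nat. ereal (real (card {n. 1 \<le> n \<and> a n \<le> N}) / real N)) = ereal \<delta>"
    and indep: "rat_independent_with_1 x"
    and L_dyadic: "is_dyadic_cube L" and L_sub: "L \<subseteq> {y. \<forall>i. 0 \<le> y $ i \<and> y $ i < 1}"
    and "kappa x < ereal \<kappa>" "0 < \<kappa>" "0 < \<delta>'" "\<delta>' < \<delta>"
  shows "Liminf sequentially
           (\<lambda>j::nat. ereal (2 powr (- real CARD('d) * real j) *
              real (card (dyadicM (\<lambda>n. frac_vec (real (a n) *\<^sub>R x)) L j))))
         \<le> ereal (2 * 12 ^ CARD('d) * (2 * \<kappa> / \<delta>') powr (real CARD('d) / (real CARD('d) + 1)))"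
proof (rule frequently_le_imp_Liminf_le)
  have "frequently (\<lambda>q. ereal (real q powr (1 / real CARD('d)) * lattice_dist (real q *\<^sub>R x)) < ereal \<kappa>) sequentially"
    using Liminf_less_imp_frequently_less \<open>kappa x < ereal \<kappa>\<close> unfolding kappa_def by blast
  then have approx: "frequently (\<lambda>q. real q powr (1 / real CARD('d)) * lattice_dist (real q *\<^sub>R x) < \<kappa>) sequentially"
    by simp
  have "eventually (\<lambda>N. ereal \<delta>' < ereal (real (card {n. 1 \<le> n \<and> a n \<le> N}) / real N)) sequentially"
    using \<open>\<delta>' < \<delta>\<close> dens by (intro less_LiminfD) simp
  then have "eventually (\<lambda>N. \<delta>' < real (card {n. 1 \<le> n \<and> a n \<le> N}) / real N) sequentially"
    by simp
  from frequently_scaled_card_dyadicM_le[OF a_pos a_incr indep L_dyadic L_sub \<open>0 < \<kappa>\<close> \<open>0 < \<delta>'\<close> approx this]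
  show "frequently (\<lambda>j. ereal (2 powr (- real CARD('d) * real j) *
              real (card (dyadicM (\<lambda>n. frac_vec (real (a n) *\<^sub>R x)) L j)))
          \<le> ereal (2 * 12 ^ CARD('d) * (2 * \<kappa> / \<delta>') powr (real CARD('d) / (real CARD('d) + 1))))
          sequentially"
    by simp
qed

lemma le_powr_quotient_by_perturbation:
  fixes X :: ereal and C \<kappa> \<delta> \<gamma> :: real
  assumes "0 \<le> \<kappa>" "0 < \<delta>" "0 < \<gamma>"
    and le: "\<And>e. 0 < e \<Longrightarrow> e < \<delta> \<Longrightarrow> X \<le> ereal (C * ((\<kappa> + e) / (\<delta> - e)) powr \<gamma>)"
  shows "X \<le> ereal (C * (\<kappa> / \<delta>) powr \<gamma>)"
proof (rule tendsto_lowerbound)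
  have base: "((\<lambda>e. (\<kappa> + e) / (\<delta> - e)) \<longlongrightarrow> \<kappa> / \<delta>) (at_right 0)"
    using \<open>0 < \<delta>\<close> by (auto intro!: tendsto_eq_intros)
  have "eventually (\<lambda>e. 0 \<le> (\<kappa> + e) / (\<delta> - e)) (at_right 0)"
    using \<open>0 \<le> \<kappa>\<close> by (intro eventually_at_rightI[of _ \<delta>] \<open>0 < \<delta>\<close>) auto
  then have "((\<lambda>e. ((\<kappa> + e) / (\<delta> - e)) powr \<gamma>) \<longlongrightarrow> (\<kappa> / \<delta>) powr \<gamma>) (at_right 0)"
    using tendsto_powr'[OF base tendsto_const, of \<gamma>] \<open>0 < \<gamma>\<close> by simp
  then show "((\<lambda>e. ereal (C * ((\<kappa> + e) / (\<delta> - e)) powr \<gamma>)) \<longlongrightarrow> ereal (C * (\<kappa> / \<delta>) powr \<gamma>)) (at_right 0)"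
    unfolding lim_ereal by (rule tendsto_mult_left)
  show "eventually (\<lambda>e. X \<le> ereal (C * ((\<kappa> + e) / (\<delta> - e)) powr \<gamma>)) (at_right 0)"
    using le by (intro eventually_at_rightI[of _ \<delta>] \<open>0 < \<delta>\<close>) auto
qed simp

lemma twelve_pow_double_powr_le:
  fixes t \<gamma> :: real and d :: nat
  assumes "0 \<le> t" "\<gamma> \<le> 1" "1 \<le> d"
  shows "2 * 12 ^ d * (2 * t) powr \<gamma> \<le> 480 ^ d * t powr \<gamma>"
proof -
  have "2 * 12 ^ d * (2 * t) powr \<gamma> = 2 * 12 ^ d * (2 powr \<gamma> * t powr \<gamma>)"
    using powr_mult[of 2 t \<gamma>] \<open>0 \<le> t\<close> by simp
  also have "\<dots> \<le> 2 * 12 ^ d * (2 * t powr \<gamma>)"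
    using powr_mono[of \<gamma> 1 2] \<open>\<gamma> \<le> 1\<close> by (intro mult_left_mono mult_right_mono) auto
  also have "\<dots> = 4 * 12 ^ d * t powr \<gamma>" by simp
  also have "\<dots> \<le> 40 ^ d * 12 ^ d * t powr \<gamma>"
    using power_increasing[of 1 d "40::real"] \<open>1 \<le> d\<close> by (intro mult_right_mono) auto
  also have "\<dots> = 480 ^ d * t powr \<gamma>" by (simp flip: power_mult_distrib)
  finally show ?thesis .
qed

theorem proposition11p4:
  fixes a :: "nat \<Rightarrow> nat" and x :: "real^'d" and \<delta> :: real and L :: "(real^'d) set"
  assumes a_pos: "\<forall>n\<ge>1. a n > 0"
    and a_incr: "\<forall>m n. 1 \<le> m \<longrightarrow> m < n \<longrightarrow> a m < a n"
    and dens: "Liminf sequentially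
                 (\<lambda>N::nat. ereal (real (card {n. 1 \<le> n \<and> a n \<le> N}) / real N)) = ereal \<delta>"
    and dens_pos: "\<delta> > 0"
    and indep: "\<forall>(c0::rat) (c::'d \<Rightarrow> rat).
                  of_rat c0 + (\<Sum>i\<in>UNIV. of_rat (c i) * x $ i) = 0 \<longrightarrow> c0 = 0 \<and> (\<forall>i. c i = 0)"
    and L_dyadic: "is_dyadic_cube L"
    and L_ne: "L \<noteq> {}"
    and L_sub: "L \<subseteq> {y. \<forall>i. 0 \<le> y $ i \<and> y $ i < 1}"
  shows "Liminf sequentially
           (\<lambda>j::nat. ereal (2 powr (- real CARD('d) * real j) *
              real (card (dyadicM (\<lambda>n. frac_vec (real (a n) *\<^sub>R x)) L j))))
         \<le> (if kappa x = \<infinity> then \<infinity>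
            else ereal (480 ^ CARD('d) *
                   (real_of_ereal (kappa x) / \<delta>) powr (real CARD('d) / (real CARD('d) + 1))))"
proof (cases "kappa x")
  case (real \<kappa>)
  have "0 \<le> \<kappa>" using kappa_nonneg[of x] real by simp
  have "Liminf sequentially
          (\<lambda>j::nat. ereal (2 powr (- real CARD('d) * real j) *
             real (card (dyadicM (\<lambda>n. frac_vec (real (a n) *\<^sub>R x)) L j))))
        \<le> ereal (2 * 12 ^ CARD('d) * (2 * \<kappa> / \<delta>) powr (real CARD('d) / (real CARD('d) + 1)))"
  proof (rule le_powr_quotient_by_perturbation)
    fix e assume "0 < e" "e < \<delta>"
    then show "Liminf sequentially
          (\<lambda>j::nat. ereal (2 powr (- real CARD('d) * real j) *
             real (card (dyadicM (\<lambda>n. frac_vec (real (a n) *\<^sub>R x)) L j))))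
        \<le> ereal (2 * 12 ^ CARD('d) * ((2 * \<kappa> + e) / (\<delta> - e)) powr (real CARD('d) / (real CARD('d) + 1)))"
      using Liminf_scaled_card_dyadicM_le[OF a_pos a_incr dens _ L_dyadic L_sub,
          where \<kappa> = "\<kappa> + e / 2" and \<delta>' = "\<delta> - e"] indep real \<open>0 \<le> \<kappa>\<close>
      unfolding rat_independent_with_1_def by (simp add: algebra_simps)
  qed (use \<open>0 \<le> \<kappa>\<close> dens_pos in auto)
  also have "\<dots> \<le> ereal (480 ^ CARD('d) * (\<kappa> / \<delta>) powr (real CARD('d) / (real CARD('d) + 1)))"
    using twelve_pow_double_powr_le[of "\<kappa> / \<delta>"] \<open>0 \<le> \<kappa>\<close> dens_pos by (simp add: Suc_leI)
  finally show ?thesis using real by simp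
qed (use kappa_nonneg[of x] in simp_all)

end
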